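(* SP, BTI, WF, PCI, IRE and RPI hold for the LTSIs of CCSKP (CCSK with proof labels) and CCSK.
   Context: CCSK processes: $X ::= \mathbf{0} \mid \alpha.X \mid X\backslash\lambda \mid X+Y \mid X \mid Y \mid \alpha[k].X$, where $\alpha$ ranges over names, co-names and $\tau$, $\lambda$ over non-$\tau$ labels, and $k$ over keys; $\mathrm{keys}(X)$ is the set of keys in $X$, and $X$ is standard if $\mathrm{keys}(X)=\emptyset$. Only reachable processes (reachable by a path from a standard process) are considered. CCSKP forward rules (with proof keyed labels $\theta$ built from strings over $\mid_L,\mid_R,+_L,+_R$, actions $\alpha[k]$ and synchronisation pairs $\langle\upsilon_1\lambda[k],\upsilon_2\overline\lambda[k]\rangle$, each having a key): act: $\alpha.X \to^{\alpha[k]} \alpha[k].X$ if $X$ standard; pre: $\alpha[k].X \to^{\theta} \alpha[k].X'$ if $X\to^\theta X'$ and the key of $\theta$ is not $k$; res: $X\backslash a \to^\theta X'\backslash a$ if $X\to^\theta X'$ and the action of $\theta$ is not $a$ or $\overline a$; par: $X\mid Y \to^{\mid_L\theta} X'\mid Y$ if $X\to^\theta X'$ and the key of $\theta$ is not in $\mathrm{keys}(Y)$ (symmetrically on the right); syn: $X\mid Y \to^{\langle\upsilon_L\lambda[k],\upsilon_R\overline\lambda[k]\rangle} X'\mid Y'$ if $X\to^{\upsilon_L\lambda[k]}X'$ and $Y\to^{\upsilon_R\overline\lambda[k]}Y'$; sum: $X+Y\to^{+_L\theta}X'+Y$ if $X\to^\theta X'$ and $Y$ standard (symmetrically on the right).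 Backward transitions are the inverses of forward ones. CCSK has the same rules with labels $\alpha[k]$ only (proof part erased); CCSK and CCSKP transitions are in bijection. Two transitions are connected if there is a path from the source of one to the target of the other. The independence relation: two transitions are independent iff they are connected and their proof keyed labels (for CCSK, those of the corresponding CCSKP transitions) are independent, where label independence is the least relation with: $+_d\theta$ independent of $+_d\theta'$ if $\theta$ independent of $\theta'$; $\mid_d\theta$ independent of $\mid_d\theta'$ if $\theta$ independent of $\theta'$; $\mid_d\theta$ independent of $\mid_{\overline d}\theta'$ if their keys differ; $\mid_d\theta$ independent of $\langle\theta_L,\theta_R\rangle$ (and symmetrically) if $\theta$ independent of $\theta_d$; $\langle\theta_1,\theta_2\rangle$ independent of $\langle\theta'_1,\theta'_2\rangle$ if $\theta_1$ independent of $\theta'_1$ and $\theta_2$ independent of $\theta'_2$. An LTSI is a combined forward/backward LTS with an irreflexive symmetric independence relation on transitions. Axioms: SP (square property): coinitial independent $t:P\to^\alpha Q$, $u:P\to^\beta R$ admit cofinal $u':Q\to^\beta S$, $t':R\to^\alpha S$. BTI: distinct coinitial backward transitions are independent. WF: no infinite backward computation. PCI: in such a square with $t$ independent of $u$, $u'$ is independent of the inverse of $t$. IRE: if $t\sim t'$ and $t'$ independent of $u$ then $t$ independent of $u$, where $\sim$ (event equivalence) is the least equivalence relating opposite sides $t,t'$ of squares built from independent coinitial $t,u$. RPI: if $t$ independent of $t'$ then the inverse of $t$ is independent of $t'$. *)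

theory Defs
  imports Main
begin

datatype 'n act = Name 'n | CoName 'n | Tau

fun compl :: "'n act \<Rightarrow> 'n act" where
  "compl (Name a) = CoName a"
| "compl (CoName a) = Name a"
| "compl Tau = Tau"

text \<open>Processes: Nil, prefix, restriction (by a name a; restricting by the
co-name has the same effect), choice, parallel, keyed prefix.\<close>
datatype ('n, 'k) proc =
    Nil
  | Pre "'n act" "('n, 'k) proc"
  | Res "('n, 'k) proc" 'n
  | Sum "('n, 'k) proc" "('n, 'k) proc"
  | Par "('n, 'k) proc" "('n, 'k) proc"
  | Keyed "'n act" 'k "('n, 'k) proc"

fun keys :: "('n, 'k) proc \<Rightarrow> 'k set" where
  "keys Nil = {}"
| "keys (Pre a X) = keys X"
| "keys (Res X a) = keys X"
| "keys (Sum X Y) = keys X \<union> keys Y"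
| "keys (Par X Y) = keys X \<union> keys Y"
| "keys (Keyed a k X) = insert k (keys X)"

definition std :: "('n, 'k) proc \<Rightarrow> bool" where
  "std X \<longleftrightarrow> keys X = {}"

datatype side = L | R

fun opp :: "side \<Rightarrow> side" where
  "opp L = R" | "opp R = L"

datatype ('n, 'k) plabel =
    PAct "'n act" 'k
  | PPar side "('n, 'k) plabel"
  | PSum side "('n, 'k) plabel"
  | PSyn "('n, 'k) plabel" "('n, 'k) plabel"

fun lkey :: "('n, 'k) plabel \<Rightarrow> 'k" where
  "lkey (PAct a k) = k"
| "lkey (PPar d t) = lkey t"
| "lkey (PSum d t) = lkey t"
| "lkey (PSyn t1 t2) = lkey t1"

fun lact :: "('n, 'k) plabel \<Rightarrow> 'n act" where
  "lact (PAct a k) = a"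
| "lact (PPar d t) = lact t"
| "lact (PSum d t) = lact t"
| "lact (PSyn t1 t2) = Tau"

fun sel :: "side \<Rightarrow> 'a \<Rightarrow> 'a \<Rightarrow> 'a" where
  "sel L x y = x" | "sel R x y = y"

inductive lind :: "('n, 'k) plabel \<Rightarrow> ('n, 'k) plabel \<Rightarrow> bool" where
  sum: "lind t t' \<Longrightarrow> lind (PSum d t) (PSum d t')"
| par: "lind t t' \<Longrightarrow> lind (PPar d t) (PPar d t')"
| par_opp: "lkey t \<noteq> lkey t' \<Longrightarrow> lind (PPar d t) (PPar (opp d) t')"
| par_syn: "lind t (sel d tL tR) \<Longrightarrow> lind (PPar d t) (PSyn tL tR)"
| syn_par: "lind (sel d tL tR) t \<Longrightarrow> lind (PSyn tL tR) (PPar d t)"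
| syn_syn: "lind t1 t1' \<Longrightarrow> lind t2 t2' \<Longrightarrow> lind (PSyn t1 t2) (PSyn t1' t2')"

inductive fwdP :: "('n, 'k) proc \<Rightarrow> ('n, 'k) plabel \<Rightarrow> ('n, 'k) proc \<Rightarrow> bool" where
  act: "std X \<Longrightarrow> fwdP (Pre a X) (PAct a k) (Keyed a k X)"
| pre: "fwdP X t X' \<Longrightarrow> lkey t \<noteq> k \<Longrightarrow> fwdP (Keyed a k X) t (Keyed a k X')"
| res: "fwdP X t X' \<Longrightarrow> lact t \<noteq> Name a \<Longrightarrow> lact t \<noteq> CoName a \<Longrightarrow>
        fwdP (Res X a) t (Res X' a)"
| parL: "fwdP X t X' \<Longrightarrow> lkey t \<notin> keys Y \<Longrightarrow> fwdP (Par X Y) (PPar L t) (Par X' Y)"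
| parR: "fwdP Y t Y' \<Longrightarrow> lkey t \<notin> keys X \<Longrightarrow> fwdP (Par X Y) (PPar R t) (Par X Y')"
| syn: "fwdP X t1 X' \<Longrightarrow> fwdP Y t2 Y' \<Longrightarrow> lact t1 \<noteq> Tau \<Longrightarrow>
        lact t2 = compl (lact t1) \<Longrightarrow> lkey t1 = lkey t2 \<Longrightarrow>
        fwdP (Par X Y) (PSyn t1 t2) (Par X' Y')"
| sumL: "fwdP X t X' \<Longrightarrow> std Y \<Longrightarrow> fwdP (Sum X Y) (PSum L t) (Sum X' Y)"
| sumR: "fwdP Y t Y' \<Longrightarrow> std X \<Longrightarrow> fwdP (Sum X Y) (PSum R t) (Sum X Y')"

text \<open>CCSK forward transitions, labels \<open>\<alpha>[k]\<close> represented as pairs.\<close>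
inductive fwdK :: "('n, 'k) proc \<Rightarrow> 'n act \<times> 'k \<Rightarrow> ('n, 'k) proc \<Rightarrow> bool" where
  act: "std X \<Longrightarrow> fwdK (Pre a X) (a, k) (Keyed a k X)"
| pre: "fwdK X (b, j) X' \<Longrightarrow> j \<noteq> k \<Longrightarrow> fwdK (Keyed a k X) (b, j) (Keyed a k X')"
| res: "fwdK X (b, j) X' \<Longrightarrow> b \<noteq> Name a \<Longrightarrow> b \<noteq> CoName a \<Longrightarrow>
        fwdK (Res X a) (b, j) (Res X' a)"
| parL: "fwdK X (b, j) X' \<Longrightarrow> j \<notin> keys Y \<Longrightarrow> fwdK (Par X Y) (b, j) (Par X' Y)"
| parR: "fwdK Y (b, j) Y' \<Longrightarrow> j \<notin> keys X \<Longrightarrow> fwdK (Par X Y) (b, j) (Par X Y')"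
| syn: "fwdK X (b, k) X' \<Longrightarrow> fwdK Y (compl b, k) Y' \<Longrightarrow> b \<noteq> Tau \<Longrightarrow>
        fwdK (Par X Y) (Tau, k) (Par X' Y')"
| sumL: "fwdK X l X' \<Longrightarrow> std Y \<Longrightarrow> fwdK (Sum X Y) l (Sum X' Y)"
| sumR: "fwdK Y l Y' \<Longrightarrow> std X \<Longrightarrow> fwdK (Sum X Y) l (Sum X Y')"

definition erase :: "('n, 'k) plabel \<Rightarrow> 'n act \<times> 'k" where
  "erase t = (lact t, lkey t)"

text \<open>A transition: source, direction (True = forward, False = backward), label, target.\<close>
datatype ('s, 'l) tr = Tr (src: 's) (fw: bool) (lab: 'l) (tgt: 's)

fun inv_tr :: "('s, 'l) tr \<Rightarrow> ('s, 'l) tr" where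
  "inv_tr (Tr P d l Q) = Tr Q (\<not> d) l P"

definition comb :: "('s \<Rightarrow> 'l \<Rightarrow> 's \<Rightarrow> bool) \<Rightarrow> ('s, 'l) tr set" where
  "comb f = {Tr P d l Q | P d l Q. (d \<and> f P l Q) \<or> (\<not> d \<and> f Q l P)}"

definition step_rel :: "('s, 'l) tr set \<Rightarrow> ('s \<times> 's) set" where
  "step_rel T = {(src t, tgt t) | t. t \<in> T}"

definition reachable :: "(('n, 'k) proc, 'l) tr set \<Rightarrow> ('n, 'k) proc set" where
  "reachable C = {P. \<exists>P0. std P0 \<and> (P0, P) \<in> (step_rel C)\<^sup>*}"

definition lts :: "(('n, 'k) proc \<Rightarrow> 'l \<Rightarrow> ('n, 'k) proc \<Rightarrow> bool) \<Rightarrow> (('n, 'k) proc, 'l) tr set" where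
  "lts f = {t \<in> comb f. src t \<in> reachable (comb f)}"

definition connected :: "('s, 'l) tr set \<Rightarrow> ('s, 'l) tr \<Rightarrow> ('s, 'l) tr \<Rightarrow> bool" where
  "connected T t u \<longleftrightarrow>
     (src t, tgt u) \<in> (step_rel T)\<^sup>* \<or> (src u, tgt t) \<in> (step_rel T)\<^sup>*"

definition TP :: "(('n, 'k) proc, ('n, 'k) plabel) tr set" where
  "TP = lts fwdP"

definition indP :: "(('n, 'k) proc, ('n, 'k) plabel) tr \<Rightarrow> (('n, 'k) proc, ('n, 'k) plabel) tr \<Rightarrow> bool" where
  "indP t u \<longleftrightarrow> t \<in> TP \<and> u \<in> TP \<and> connected TP t u \<and> lind (lab t) (lab u)"

definition TK :: "(('n, 'k) proc, 'n act \<times> 'k) tr set" where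
  "TK = lts fwdK"

definition indK :: "(('n, 'k) proc, 'n act \<times> 'k) tr \<Rightarrow> (('n, 'k) proc, 'n act \<times> 'k) tr \<Rightarrow> bool" where
  "indK t u \<longleftrightarrow> t \<in> TK \<and> u \<in> TK \<and> connected TK t u \<and>
     (\<exists>\<theta> \<theta>'. Tr (src t) (fw t) \<theta> (tgt t) \<in> TP \<and> erase \<theta> = lab t \<and>
             Tr (src u) (fw u) \<theta>' (tgt u) \<in> TP \<and> erase \<theta>' = lab u \<and>
             lind \<theta> \<theta>')"

definition square :: "('s, 'l) tr set \<Rightarrow> ('s, 'l) tr \<Rightarrow> ('s, 'l) tr \<Rightarrow> ('s, 'l) tr \<Rightarrow> ('s, 'l) tr \<Rightarrow> bool" where
  "square T t u u' t' \<longleftrightarrow> t \<in> T \<and> u \<in> T \<and> u' \<in> T \<and> t' \<in> T \<and>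
     src t = src u \<and> src u' = tgt t \<and> src t' = tgt u \<and> tgt u' = tgt t' \<and>
     lab u' = lab u \<and> fw u' = fw u \<and> lab t' = lab t \<and> fw t' = fw t"

definition SP :: "('s, 'l) tr set \<Rightarrow> (('s, 'l) tr \<Rightarrow> ('s, 'l) tr \<Rightarrow> bool) \<Rightarrow> bool" where
  "SP T ind \<longleftrightarrow> (\<forall>t\<in>T. \<forall>u\<in>T. src t = src u \<and> ind t u \<longrightarrow> (\<exists>u' t'. square T t u u' t'))"

definition BTI :: "('s, 'l) tr set \<Rightarrow> (('s, 'l) tr \<Rightarrow> ('s, 'l) tr \<Rightarrow> bool) \<Rightarrow> bool" where
  "BTI T ind \<longleftrightarrow> (\<forall>t\<in>T. \<forall>u\<in>T. \<not> fw t \<and> \<not> fw u \<and> src t = src u \<and> t \<noteq> u \<longrightarrow> ind t u)"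

definition WF :: "('s, 'l) tr set \<Rightarrow> bool" where
  "WF T \<longleftrightarrow> \<not> (\<exists>f :: nat \<Rightarrow> ('s, 'l) tr. \<forall>n. f n \<in> T \<and> \<not> fw (f n) \<and> tgt (f n) = src (f (Suc n)))"

definition PCI :: "('s, 'l) tr set \<Rightarrow> (('s, 'l) tr \<Rightarrow> ('s, 'l) tr \<Rightarrow> bool) \<Rightarrow> bool" where
  "PCI T ind \<longleftrightarrow> (\<forall>t u u' t'. square T t u u' t' \<and> ind t u \<longrightarrow> ind u' (inv_tr t))"

definition ev_eq :: "('s, 'l) tr set \<Rightarrow> (('s, 'l) tr \<Rightarrow> ('s, 'l) tr \<Rightarrow> bool) \<Rightarrow> (('s, 'l) tr \<times> ('s, 'l) tr) set" where
  "ev_eq T ind = (let S = {(t, t') | t t'. \<exists>u u'. square T t u u' t' \<and> ind t u} in (S \<union> S\<inverse>)\<^sup>*)"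

definition IRE :: "('s, 'l) tr set \<Rightarrow> (('s, 'l) tr \<Rightarrow> ('s, 'l) tr \<Rightarrow> bool) \<Rightarrow> bool" where
  "IRE T ind \<longleftrightarrow> (\<forall>t\<in>T. \<forall>t'\<in>T. \<forall>u\<in>T. (t, t') \<in> ev_eq T ind \<and> ind t' u \<longrightarrow> ind t u)"

definition RPI :: "('s, 'l) tr set \<Rightarrow> (('s, 'l) tr \<Rightarrow> ('s, 'l) tr \<Rightarrow> bool) \<Rightarrow> bool" where
  "RPI T ind \<longleftrightarrow> (\<forall>t\<in>T. \<forall>t'\<in>T. ind t t' \<longrightarrow> ind (inv_tr t) t')"

definition all_axioms :: "('s, 'l) tr set \<Rightarrow> (('s, 'l) tr \<Rightarrow> ('s, 'l) tr \<Rightarrow> bool) \<Rightarrow> bool" where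
  "all_axioms T ind \<longleftrightarrow> SP T ind \<and> BTI T ind \<and> WF T \<and> PCI T ind \<and> IRE T ind \<and> RPI T ind"

end

(*
  A CCSKP transition is determined by its source, direction and target, and the axioms reduce
  to three facts about combined (forward or backward) steps, each proved by structural induction
  on the common source process: independent coinitial steps close a diamond; distinct coinitial
  backward steps are independent, so a backward step is determined by its key; and a backward
  step removes a key, which gives well-foundedness.

  Independence is a symmetric relation on labels, restricted to connected transitions. PCI, IRE
  and RPI therefore hold as soon as squares of independent transitions carry equal labels on
  opposite sides, which for CCSKP is part of being a square. CCSK transitions are the CCSKP
  transitions with erased proof labels, in bijection with them. Opposite sides of a CCSK square
  have equal keys, and since backward steps are determined by their keys, the lifted square is a
  CCSKP square with equal proof labels on opposite sides.
*)
theory Submission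
  imports Defs
begin

fun wf_label :: "('n, 'k) plabel \<Rightarrow> bool" where
  "wf_label (PAct a k) = True"
| "wf_label (PPar d t) = wf_label t"
| "wf_label (PSum d t) = wf_label t"
| "wf_label (PSyn t1 t2) = (wf_label t1 \<and> wf_label t2 \<and> lkey t1 = lkey t2)"

lemma lind_sym: "lind \<theta> \<upsilon> \<Longrightarrow> lind \<upsilon> \<theta>"
proof (induction rule: lind.induct)
  case (par_opp t t' d)
  then show ?case using lind.par_opp[of t' t "opp d"] by (cases d) auto
qed (simp_all add: lind.intros)

lemma lind_lkey_neq: "lind \<theta> \<upsilon> \<Longrightarrow> wf_label \<theta> \<Longrightarrow> wf_label \<upsilon> \<Longrightarrow> lkey \<theta> \<noteq> lkey \<upsilon>"
proof (induction rule: lind.induct)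
  case (par_syn t d tL tR) then show ?case by (cases d) auto
next
  case (syn_par d tL tR t) then show ?case by (cases d) auto
qed auto

lemma lind_simps [simp]:
  "\<not> lind (PAct a k) \<upsilon>"
  "\<not> lind \<theta> (PAct a k)"
  "lind (PPar d t) (PPar d' t') \<longleftrightarrow> d' = d \<and> lind t t' \<or> d' = opp d \<and> lkey t \<noteq> lkey t'"
  "lind (PPar d t) (PSyn tL tR) \<longleftrightarrow> lind t (sel d tL tR)"
  "lind (PSyn tL tR) (PPar d t) \<longleftrightarrow> lind (sel d tL tR) t"
  "lind (PSyn t1 t2) (PSyn t1' t2') \<longleftrightarrow> lind t1 t1' \<and> lind t2 t2'"
  "lind (PSum d t) (PSum d' t') \<longleftrightarrow> d' = d \<and> lind t t'"
  "\<not> lind (PSum d t) (PPar d' t')" "\<not> lind (PPar d' t') (PSum d t)"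
  "\<not> lind (PSum d t) (PSyn tL tR)" "\<not> lind (PSyn tL tR) (PSum d t)"
  by (auto elim: lind.cases intro: lind.intros)

lemma fwdP_keys: "fwdP P \<theta> Q \<Longrightarrow> keys Q = insert (lkey \<theta>) (keys P) \<and> lkey \<theta> \<notin> keys P"
  by (induction rule: fwdP.induct) (auto simp: std_def)

lemma fwdP_wf_label: "fwdP P \<theta> Q \<Longrightarrow> wf_label \<theta>"
  by (induction rule: fwdP.induct) auto

lemma finite_keys: "finite (keys X)"
  by (induction X) auto

section \<open>Combined steps of CCSKP\<close>

definition stepP :: "('n, 'k) proc \<Rightarrow> bool \<Rightarrow> ('n, 'k) plabel \<Rightarrow> ('n, 'k) proc \<Rightarrow> bool" where
  "stepP P d \<theta> Q \<longleftrightarrow> (if d then fwdP P \<theta> Q else fwdP Q \<theta> P)"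

lemma stepP_keys: "stepP P d \<theta> Q \<Longrightarrow> insert (lkey \<theta>) (keys P) = insert (lkey \<theta>) (keys Q)"
  unfolding stepP_def by (cases d) (auto dest: fwdP_keys)

lemma stepP_neq: "stepP P d \<theta> Q \<Longrightarrow> P \<noteq> Q"
  unfolding stepP_def by (cases d) (auto dest: fwdP_keys)

lemma backward_stepP_key: "stepP P False \<theta> Q \<Longrightarrow> lkey \<theta> \<in> keys P"
  by (simp add: stepP_def fwdP_keys)

lemma backward_stepP_not_std: "stepP P False \<theta> Q \<Longrightarrow> \<not> std P"
  using backward_stepP_key by (fastforce simp: std_def)

lemma backward_stepP_card_keys: "stepP P False \<theta> Q \<Longrightarrow> card (keys Q) < card (keys P)"
  using fwdP_keys[of Q \<theta> P] finite_keys[of Q] by (simp add: stepP_def)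

lemma stepP_lind_lkey_neq: "stepP P d \<theta> Q \<Longrightarrow> stepP P' e \<upsilon> Q' \<Longrightarrow> lind \<theta> \<upsilon> \<Longrightarrow> lkey \<theta> \<noteq> lkey \<upsilon>"
  unfolding stepP_def by (metis fwdP_wf_label lind_lkey_neq)

lemma stepP_intros:
  "stepP X d \<theta> X' \<Longrightarrow> lkey \<theta> \<noteq> k \<Longrightarrow> stepP (Keyed a k X) d \<theta> (Keyed a k X')"
  "stepP X d \<theta> X' \<Longrightarrow> lact \<theta> \<noteq> Name c \<Longrightarrow> lact \<theta> \<noteq> CoName c \<Longrightarrow> stepP (Res X c) d \<theta> (Res X' c)"
  "stepP X d \<theta> X' \<Longrightarrow> lkey \<theta> \<notin> keys Y \<Longrightarrow> stepP (Par X Y) d (PPar L \<theta>) (Par X' Y)"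
  "stepP Y d \<theta> Y' \<Longrightarrow> lkey \<theta> \<notin> keys X \<Longrightarrow> stepP (Par X Y) d (PPar R \<theta>) (Par X Y')"
  "stepP X d \<theta>1 X' \<Longrightarrow> stepP Y d \<theta>2 Y' \<Longrightarrow> lact \<theta>1 \<noteq> Tau \<Longrightarrow> lact \<theta>2 = compl (lact \<theta>1) \<Longrightarrow>
     lkey \<theta>1 = lkey \<theta>2 \<Longrightarrow> stepP (Par X Y) d (PSyn \<theta>1 \<theta>2) (Par X' Y')"
  "stepP X d \<theta> X' \<Longrightarrow> std Y \<Longrightarrow> stepP (Sum X Y) d (PSum L \<theta>) (Sum X' Y)"
  "stepP Y d \<theta> Y' \<Longrightarrow> std X \<Longrightarrow> stepP (Sum X Y) d (PSum R \<theta>) (Sum X Y')"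
  unfolding stepP_def by (cases d; simp add: fwdP.intros)+

lemma stepP_NilE: "stepP Nil d \<theta> Q \<Longrightarrow> P"
  unfolding stepP_def by (cases d) (auto elim: fwdP.cases)

lemma stepP_PreE:
  assumes "stepP (Pre a X) d \<theta> Q"
  obtains k where "d" "\<theta> = PAct a k" "Q = Keyed a k X"
  using assms unfolding stepP_def by (cases d) (auto elim: fwdP.cases)

lemma stepP_KeyedE:
  assumes "stepP (Keyed a k X) d \<theta> Q"
  obtains (act) "\<not> d" "\<theta> = PAct a k" "Q = Pre a X" "std X"
  | (pre) X' where "Q = Keyed a k X'" "stepP X d \<theta> X'" "lkey \<theta> \<noteq> k"
  using assms unfolding stepP_def by (cases d) (auto elim: fwdP.cases)

lemma stepP_ResE:
  assumes "stepP (Res X a) d \<theta> Q"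
  obtains X' where "Q = Res X' a" "stepP X d \<theta> X'" "lact \<theta> \<noteq> Name a" "lact \<theta> \<noteq> CoName a"
  using assms unfolding stepP_def by (cases d) (auto elim: fwdP.cases)

lemma stepP_SumE:
  assumes "stepP (Sum X Y) d \<theta> Q"
  obtains (L) X' \<theta>0 where "Q = Sum X' Y" "\<theta> = PSum L \<theta>0" "stepP X d \<theta>0 X'" "std Y"
  | (R) Y' \<theta>0 where "Q = Sum X Y'" "\<theta> = PSum R \<theta>0" "stepP Y d \<theta>0 Y'" "std X"
  using assms unfolding stepP_def by (cases d) (auto elim: fwdP.cases)

lemma stepP_ParE:
  assumes "stepP (Par X Y) d \<theta> Q"
  obtains (L) X' \<theta>0 where "Q = Par X' Y" "\<theta> = PPar L \<theta>0" "stepP X d \<theta>0 X'" "lkey \<theta>0 \<notin> keys Y"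
  | (R) Y' \<theta>0 where "Q = Par X Y'" "\<theta> = PPar R \<theta>0" "stepP Y d \<theta>0 Y'" "lkey \<theta>0 \<notin> keys X"
  | (syn) X' Y' \<theta>1 \<theta>2 where "Q = Par X' Y'" "\<theta> = PSyn \<theta>1 \<theta>2" "stepP X d \<theta>1 X'" "stepP Y d \<theta>2 Y'"
      "lact \<theta>1 \<noteq> Tau" "lact \<theta>2 = compl (lact \<theta>1)" "lkey \<theta>1 = lkey \<theta>2"
  using assms unfolding stepP_def by (cases d) (auto elim: fwdP.cases)

section \<open>Diamonds and backward determinism\<close>

lemma stepP_label_unique: "stepP P d \<theta> Q \<Longrightarrow> stepP P d \<theta>' Q \<Longrightarrow> \<theta>' = \<theta>"
proof (induction P arbitrary: \<theta> \<theta>' Q)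
  case Nil then show ?case by (auto elim: stepP_NilE)
next
  case (Pre a X) then show ?case by (auto elim!: stepP_PreE)
next
  case (Keyed a k X) then show ?case by (auto elim!: stepP_KeyedE)
next
  case (Res X c) then show ?case by (auto elim!: stepP_ResE)
next
  case (Sum X Y) then show ?case by (auto elim!: stepP_SumE dest: stepP_neq)
next
  case (Par X Y) then show ?case by (auto elim!: stepP_ParE dest: stepP_neq)
qed

definition backward_lind_at :: "('n, 'k) proc \<Rightarrow> bool" where
  "backward_lind_at P \<longleftrightarrow> (\<forall>\<theta> \<theta>' Q Q'. stepP P False \<theta> Q \<longrightarrow> stepP P False \<theta>' Q' \<longrightarrow>
     (\<theta>, Q) \<noteq> (\<theta>', Q') \<longrightarrow> lind \<theta> \<theta>')"

lemma backward_lind_atD: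
  "backward_lind_at P \<Longrightarrow> stepP P False \<theta> Q \<Longrightarrow> stepP P False \<theta>' Q' \<Longrightarrow> (\<theta>, Q) \<noteq> (\<theta>', Q') \<Longrightarrow>
    lind \<theta> \<theta>'"
  unfolding backward_lind_at_def by blast

lemma backward_lind_Par_left:
  assumes X: "backward_lind_at X" and \<theta>: "stepP X False \<theta> X1" "lkey \<theta> \<notin> keys Y"
    and \<theta>': "stepP (Par X Y) False \<theta>' Q'" and ne: "(PPar L \<theta>, Par X1 Y) \<noteq> (\<theta>', Q')"
  shows "lind (PPar L \<theta>) \<theta>'"
  using \<theta>'
proof (cases rule: stepP_ParE)
  case (L X2 \<theta>0)
  then show ?thesis using ne backward_lind_atD[OF X \<theta>(1) L(3)] by auto
next
  case (R Y2 \<theta>0)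
  then show ?thesis using \<theta>(1) by (auto dest: backward_stepP_key)
next
  case (syn X2 Y2 \<theta>1 \<theta>2)
  then have "\<theta> \<noteq> \<theta>1" using \<theta>(2) by (auto dest: backward_stepP_key)
  then show ?thesis using syn backward_lind_atD[OF X \<theta>(1) syn(3)] by simp
qed

lemma backward_lind_Par_right:
  assumes Y: "backward_lind_at Y" and \<theta>: "stepP Y False \<theta> Y1" "lkey \<theta> \<notin> keys X"
    and \<theta>': "stepP (Par X Y) False \<theta>' Q'" and ne: "(PPar R \<theta>, Par X Y1) \<noteq> (\<theta>', Q')"
  shows "lind (PPar R \<theta>) \<theta>'"
  using \<theta>'
proof (cases rule: stepP_ParE)
  case (L X2 \<theta>0)
  then show ?thesis using \<theta>(1) by (auto dest: backward_stepP_key)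
next
  case (R Y2 \<theta>0)
  then show ?thesis using ne backward_lind_atD[OF Y \<theta>(1) R(3)] by auto
next
  case (syn X2 Y2 \<theta>1 \<theta>2)
  then have "\<theta> \<noteq> \<theta>2" using \<theta>(2) by (auto dest: backward_stepP_key)
  then show ?thesis using syn backward_lind_atD[OF Y \<theta>(1) syn(4)] by simp
qed

lemma backward_lind_at_Par:
  assumes X: "backward_lind_at X" and Y: "backward_lind_at Y"
  shows "backward_lind_at (Par X Y)"
  unfolding backward_lind_at_def
proof (intro allI impI)
  fix \<theta> \<theta>' Q Q'
  assume \<theta>: "stepP (Par X Y) False \<theta> Q" and \<theta>': "stepP (Par X Y) False \<theta>' Q'" and ne: "(\<theta>, Q) \<noteq> (\<theta>', Q')"
  from \<theta> show "lind \<theta> \<theta>'"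
  proof (cases rule: stepP_ParE)
    case (L X1 \<theta>0)
    then show ?thesis using backward_lind_Par_left[OF X _ _ \<theta>'] ne by simp
  next
    case (R Y1 \<theta>0)
    then show ?thesis using backward_lind_Par_right[OF Y _ _ \<theta>'] ne by simp
  next
    case \<theta>syn: (syn X1 Y1 \<theta>1 \<theta>2)
    from \<theta>' show ?thesis
    proof (cases rule: stepP_ParE)
      case (L X2 \<theta>0)
      then show ?thesis using backward_lind_Par_left[OF X _ _ \<theta>] ne lind_sym by metis
    next
      case (R Y2 \<theta>0)
      then show ?thesis using backward_lind_Par_right[OF Y _ _ \<theta>] ne lind_sym by metis
    next
      case (syn X2 Y2 \<theta>1' \<theta>2')
      have "lind \<theta>1 \<theta>1' \<or> (\<theta>1, X1) = (\<theta>1', X2)" "lind \<theta>2 \<theta>2' \<or> (\<theta>2, Y1) = (\<theta>2', Y2)"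
        using backward_lind_atD[OF X \<theta>syn(3) syn(3)] backward_lind_atD[OF Y \<theta>syn(4) syn(4)] by blast+
      moreover have "(\<theta>1, X1) \<noteq> (\<theta>1', X2) \<or> (\<theta>2, Y1) \<noteq> (\<theta>2', Y2)"
        using ne \<theta>syn syn by auto
      txt \<open>The two halves of a synchronisation share its key.\<close>
      moreover have "lind \<theta>1 \<theta>1' \<Longrightarrow> \<theta>2 \<noteq> \<theta>2'" "lind \<theta>2 \<theta>2' \<Longrightarrow> \<theta>1 \<noteq> \<theta>1'"
        using stepP_lind_lkey_neq[OF \<theta>syn(3) syn(3)] stepP_lind_lkey_neq[OF \<theta>syn(4) syn(4)] \<theta>syn(7) syn(7)
        by auto
      ultimately show ?thesis using \<theta>syn syn by auto
    qed
  qed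
qed

lemma backward_lind_at: "backward_lind_at P"
proof (induction P)
  case (Par X Y) then show ?case by (rule backward_lind_at_Par)
next
  case (Keyed a k X) then show ?case
    unfolding backward_lind_at_def by (auto elim!: stepP_KeyedE dest: backward_stepP_not_std)
next
  case (Res X c) then show ?case
    unfolding backward_lind_at_def by (auto elim!: stepP_ResE)
next
  case (Sum X Y)
  show ?case unfolding backward_lind_at_def
  proof (intro allI impI)
    fix \<theta> \<theta>' Q Q'
    assume \<theta>: "stepP (Sum X Y) False \<theta> Q" and \<theta>': "stepP (Sum X Y) False \<theta>' Q'" and ne: "(\<theta>, Q) \<noteq> (\<theta>', Q')"
    from \<theta> show "lind \<theta> \<theta>'"
    proof (cases rule: stepP_SumE)
      case \<theta>L: (L X1 \<theta>0)
      from \<theta>' show ?thesis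
      proof (cases rule: stepP_SumE)
        case (L X2 \<theta>0')
        then show ?thesis using ne \<theta>L backward_lind_atD[OF Sum.IH(1) \<theta>L(3) L(3)] by auto
      qed (use \<theta>L in \<open>auto dest: backward_stepP_not_std\<close>)
    next
      case \<theta>R: (R Y1 \<theta>0)
      from \<theta>' show ?thesis
      proof (cases rule: stepP_SumE)
        case (R Y2 \<theta>0')
        then show ?thesis using ne \<theta>R backward_lind_atD[OF Sum.IH(2) \<theta>R(3) R(3)] by auto
      qed (use \<theta>R in \<open>auto dest: backward_stepP_not_std\<close>)
    qed
  qed
qed (auto simp: backward_lind_at_def elim: stepP_NilE stepP_PreE)

lemma backward_stepP_lind:
  "stepP P False \<theta> Q \<Longrightarrow> stepP P False \<theta>' Q' \<Longrightarrow> (\<theta>, Q) \<noteq> (\<theta>', Q') \<Longrightarrow> lind \<theta> \<theta>'"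
  using backward_lind_at backward_lind_atD by blast

lemma backward_stepP_key_determined:
  assumes "stepP P False \<theta> Q" "stepP P False \<theta>' Q'" "lkey \<theta>' = lkey \<theta>"
  shows "\<theta>' = \<theta> \<and> Q' = Q"
proof (rule ccontr)
  assume "\<not> (\<theta>' = \<theta> \<and> Q' = Q)"
  then have "lind \<theta> \<theta>'" using backward_stepP_lind assms by blast
  then show False using stepP_lind_lkey_neq[OF assms(1,2)] assms(3) by simp
qed

lemma stepP_key_fresh: "stepP P d \<theta> Q \<Longrightarrow> k \<notin> keys P \<Longrightarrow> k \<noteq> lkey \<theta> \<Longrightarrow> k \<notin> keys Q"
  by (drule stepP_keys) blast

definition stepP_diamond_at :: "('n, 'k) proc \<Rightarrow> bool" where
  "stepP_diamond_at P \<longleftrightarrow> (\<forall>d e \<theta> \<upsilon> Q Q'. stepP P d \<theta> Q \<longrightarrow> stepP P e \<upsilon> Q' \<longrightarrow> lind \<theta> \<upsilon> \<longrightarrow>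
     (\<exists>S. stepP Q e \<upsilon> S \<and> stepP Q' d \<theta> S))"

lemma stepP_diamond_atD:
  "stepP_diamond_at P \<Longrightarrow> stepP P d \<theta> Q \<Longrightarrow> stepP P e \<upsilon> Q' \<Longrightarrow> lind \<theta> \<upsilon> \<Longrightarrow>
    \<exists>S. stepP Q e \<upsilon> S \<and> stepP Q' d \<theta> S"
  unfolding stepP_diamond_at_def by blast

lemma stepP_diamond_Par_left:
  assumes X: "stepP_diamond_at X" and \<theta>: "stepP X d \<theta> X1" "lkey \<theta> \<notin> keys Y"
    and \<upsilon>: "stepP (Par X Y) e \<upsilon> Q'" and ind: "lind (PPar L \<theta>) \<upsilon>"
  shows "\<exists>S. stepP (Par X1 Y) e \<upsilon> S \<and> stepP Q' d (PPar L \<theta>) S"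
  using \<upsilon>
proof (cases rule: stepP_ParE)
  case (L X2 \<upsilon>0)
  with ind have "lind \<theta> \<upsilon>0" by simp
  then obtain S where "stepP X1 e \<upsilon>0 S" "stepP X2 d \<theta> S"
    using stepP_diamond_atD[OF X \<theta>(1) L(3)] by blast
  then show ?thesis using \<theta> L by (intro exI[of _ "Par S Y"]) (simp add: stepP_intros)
next
  case (R Y2 \<upsilon>0)
  with ind have "lkey \<upsilon>0 \<noteq> lkey \<theta>" by auto
  then have "lkey \<upsilon>0 \<notin> keys X1" "lkey \<theta> \<notin> keys Y2"
    using stepP_key_fresh[OF \<theta>(1) R(4)] stepP_key_fresh[OF R(3) \<theta>(2)] by auto
  then show ?thesis using \<theta> R by (intro exI[of _ "Par X1 Y2"]) (simp add: stepP_intros)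
next
  case (syn X2 Y2 \<upsilon>1 \<upsilon>2)
  with ind have "lind \<theta> \<upsilon>1" by simp
  then obtain S where "stepP X1 e \<upsilon>1 S" "stepP X2 d \<theta> S"
    using stepP_diamond_atD[OF X \<theta>(1) syn(3)] by blast
  moreover have "lkey \<theta> \<notin> keys Y2"
    using stepP_key_fresh[OF syn(4) \<theta>(2)] stepP_lind_lkey_neq[OF \<theta>(1) syn(3) \<open>lind \<theta> \<upsilon>1\<close>] syn(7)
    by simp
  ultimately show ?thesis using \<theta> syn by (intro exI[of _ "Par S Y2"]) (simp add: stepP_intros)
qed

lemma stepP_diamond_Par_right:
  assumes Y: "stepP_diamond_at Y" and \<theta>: "stepP Y d \<theta> Y1" "lkey \<theta> \<notin> keys X"
    and \<upsilon>: "stepP (Par X Y) e \<upsilon> Q'" and ind: "lind (PPar R \<theta>) \<upsilon>"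
  shows "\<exists>S. stepP (Par X Y1) e \<upsilon> S \<and> stepP Q' d (PPar R \<theta>) S"
  using \<upsilon>
proof (cases rule: stepP_ParE)
  case (L X2 \<upsilon>0)
  with ind have "lkey \<upsilon>0 \<noteq> lkey \<theta>" by auto
  then have "lkey \<upsilon>0 \<notin> keys Y1" "lkey \<theta> \<notin> keys X2"
    using stepP_key_fresh[OF \<theta>(1) L(4)] stepP_key_fresh[OF L(3) \<theta>(2)] by auto
  then show ?thesis using \<theta> L by (intro exI[of _ "Par X2 Y1"]) (simp add: stepP_intros)
next
  case (R Y2 \<upsilon>0)
  with ind have "lind \<theta> \<upsilon>0" by simp
  then obtain S where "stepP Y1 e \<upsilon>0 S" "stepP Y2 d \<theta> S"
    using stepP_diamond_atD[OF Y \<theta>(1) R(3)] by blast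
  then show ?thesis using \<theta> R by (intro exI[of _ "Par X S"]) (simp add: stepP_intros)
next
  case (syn X2 Y2 \<upsilon>1 \<upsilon>2)
  with ind have "lind \<theta> \<upsilon>2" by simp
  then obtain S where "stepP Y1 e \<upsilon>2 S" "stepP Y2 d \<theta> S"
    using stepP_diamond_atD[OF Y \<theta>(1) syn(4)] by blast
  moreover have "lkey \<theta> \<notin> keys X2"
    using stepP_key_fresh[OF syn(3) \<theta>(2)] stepP_lind_lkey_neq[OF \<theta>(1) syn(4) \<open>lind \<theta> \<upsilon>2\<close>] syn(7)
    by simp
  ultimately show ?thesis using \<theta> syn by (intro exI[of _ "Par X2 S"]) (simp add: stepP_intros)
qed

lemma stepP_diamond_at_Par:
  assumes X: "stepP_diamond_at X" and Y: "stepP_diamond_at Y"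
  shows "stepP_diamond_at (Par X Y)"
  unfolding stepP_diamond_at_def
proof (intro allI impI)
  fix d e \<theta> \<upsilon> Q Q' assume \<theta>: "stepP (Par X Y) d \<theta> Q" and \<upsilon>: "stepP (Par X Y) e \<upsilon> Q'" and ind: "lind \<theta> \<upsilon>"
  from \<theta> show "\<exists>S. stepP Q e \<upsilon> S \<and> stepP Q' d \<theta> S"
  proof (cases rule: stepP_ParE)
    case (L X1 \<theta>0)
    then show ?thesis using stepP_diamond_Par_left[OF X _ _ \<upsilon>] ind by simp
  next
    case (R Y1 \<theta>0)
    then show ?thesis using stepP_diamond_Par_right[OF Y _ _ \<upsilon>] ind by simp
  next
    case \<theta>syn: (syn X1 Y1 \<theta>1 \<theta>2)
    from \<upsilon> show ?thesis
    proof (cases rule: stepP_ParE)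
      case (L X2 \<upsilon>0)
      then show ?thesis using stepP_diamond_Par_left[OF X _ _ \<theta>] ind lind_sym by blast
    next
      case (R Y2 \<upsilon>0)
      then show ?thesis using stepP_diamond_Par_right[OF Y _ _ \<theta>] ind lind_sym by blast
    next
      case (syn X2 Y2 \<upsilon>1 \<upsilon>2)
      with ind \<theta>syn have "lind \<theta>1 \<upsilon>1" "lind \<theta>2 \<upsilon>2" by simp_all
      then obtain S T where "stepP X1 e \<upsilon>1 S" "stepP X2 d \<theta>1 S" "stepP Y1 e \<upsilon>2 T" "stepP Y2 d \<theta>2 T"
        using stepP_diamond_atD[OF X \<theta>syn(3) syn(3)] stepP_diamond_atD[OF Y \<theta>syn(4) syn(4)] by blast
      then show ?thesis using \<theta>syn syn by (intro exI[of _ "Par S T"]) (simp add: stepP_intros)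
    qed
  qed
qed

lemma stepP_diamond_at: "stepP_diamond_at P"
proof (induction P)
  case (Par X Y) then show ?case by (rule stepP_diamond_at_Par)
next
  case (Keyed a k X)
  show ?case unfolding stepP_diamond_at_def
  proof (intro allI impI)
    fix d e \<theta> \<upsilon> Q Q' assume "stepP (Keyed a k X) d \<theta> Q" "stepP (Keyed a k X) e \<upsilon> Q'" "lind \<theta> \<upsilon>"
    then show "\<exists>S. stepP Q e \<upsilon> S \<and> stepP Q' d \<theta> S"
      using stepP_diamond_atD[OF Keyed.IH]
      by (elim stepP_KeyedE; simp) (metis stepP_intros(1))
  qed
next
  case (Res X c)
  show ?case unfolding stepP_diamond_at_def
  proof (intro allI impI)
    fix d e \<theta> \<upsilon> Q Q' assume "stepP (Res X c) d \<theta> Q" "stepP (Res X c) e \<upsilon> Q'" "lind \<theta> \<upsilon>"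
    then show "\<exists>S. stepP Q e \<upsilon> S \<and> stepP Q' d \<theta> S"
      using stepP_diamond_atD[OF Res.IH]
      by (elim stepP_ResE; simp) (metis stepP_intros(2))
  qed
next
  case (Sum X Y)
  show ?case unfolding stepP_diamond_at_def
  proof (intro allI impI)
    fix d e \<theta> \<upsilon> Q Q' assume "stepP (Sum X Y) d \<theta> Q" "stepP (Sum X Y) e \<upsilon> Q'" "lind \<theta> \<upsilon>"
    then show "\<exists>S. stepP Q e \<upsilon> S \<and> stepP Q' d \<theta> S"
      using stepP_diamond_atD[OF Sum.IH(1)] stepP_diamond_atD[OF Sum.IH(2)]
      by (elim stepP_SumE; simp) (metis stepP_intros(6), metis stepP_intros(7))
  qed
qed (auto simp: stepP_diamond_at_def elim: stepP_NilE stepP_PreE)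

lemma stepP_diamond:
  "stepP P d \<theta> Q \<Longrightarrow> stepP P e \<upsilon> Q' \<Longrightarrow> lind \<theta> \<upsilon> \<Longrightarrow> \<exists>S. stepP Q e \<upsilon> S \<and> stepP Q' d \<theta> S"
  using stepP_diamond_at stepP_diamond_atD by blast

lemma stepP_square_label_determined:
  assumes "stepP P d \<theta> Q" "stepP P e \<upsilon> Q'" "lind \<theta> \<upsilon>"
    and "stepP Q e \<upsilon>' S" "stepP Q' d \<theta>' S" "lkey \<upsilon>' = lkey \<upsilon>" "lkey \<theta>' = lkey \<theta>"
  shows "\<upsilon>' = \<upsilon>"
proof -
  obtain S0 where S0: "stepP Q e \<upsilon> S0" "stepP Q' d \<theta> S0"
    using stepP_diamond[OF assms(1-3)] by blast
  show ?thesis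
  proof (cases e)
    case False
    then show ?thesis using backward_stepP_key_determined[of Q \<upsilon> S0 \<upsilon>' S] S0(1) assms(4,6) by simp
  next
    case e: True
    show ?thesis
    proof (cases d)
      case False
      then have "S = S0" using backward_stepP_key_determined[of Q' \<theta> S0 \<theta>' S] S0(2) assms(5,7) by simp
      then show ?thesis using stepP_label_unique S0(1) assms(4) by blast
    next
      case d: True
      txt \<open>Both sides close forwards at S; undoing them is a backward diamond, which must lead back to P.\<close>
      have undo: "stepP S False \<upsilon>' Q" "stepP S False \<theta>' Q'"
        using assms(4,5) d e by (simp_all add: stepP_def)
      have "lkey \<theta> \<noteq> lkey \<upsilon>" using stepP_lind_lkey_neq[OF assms(1-3)] .
      then have "\<upsilon>' \<noteq> \<theta>'" using assms(6,7) by auto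
      then have "lind \<upsilon>' \<theta>'" using backward_stepP_lind[OF undo] by simp
      then obtain P0 where P0: "stepP Q False \<theta>' P0" "stepP Q' False \<upsilon>' P0"
        using stepP_diamond[OF undo] by blast
      have "stepP Q False \<theta> P" "stepP Q' False \<upsilon> P"
        using assms(1,2) d e by (simp_all add: stepP_def)
      then have "P0 = P" using backward_stepP_key_determined P0(1) assms(7) by blast
      then show ?thesis using backward_stepP_key_determined P0(2) \<open>stepP Q' False \<upsilon> P\<close> assms(6) by blast
    qed
  qed
qed

section \<open>LTSIs with label-induced independence\<close>

lemma square_sym: "square T t u u' t' \<Longrightarrow> square T u t t' u'"
  by (auto simp: square_def)

lemma inv_tr_sel [simp]:
  "src (inv_tr t) = tgt t" "tgt (inv_tr t) = src t" "fw (inv_tr t) = (\<not> fw t)" "lab (inv_tr t) = lab t"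
  by (cases t; simp)+

lemma step_rel_memI: "t \<in> T \<Longrightarrow> (src t, tgt t) \<in> step_rel T"
  by (auto simp: step_rel_def)

lemma WF_if_backward_decreasing:
  fixes m :: "'s \<Rightarrow> nat"
  assumes "\<And>t. t \<in> T \<Longrightarrow> \<not> fw t \<Longrightarrow> m (tgt t) < m (src t)"
  shows "WF T"
  unfolding WF_def
proof
  assume "\<exists>f. \<forall>n. f n \<in> T \<and> \<not> fw (f n) \<and> tgt (f n) = src (f (Suc n))"
  then obtain f where "\<And>n. f n \<in> T \<and> \<not> fw (f n) \<and> tgt (f n) = src (f (Suc n))" by blast
  then have "\<exists>g. \<forall>n. (g (Suc n), g n) \<in> measure m"
    using assms by (intro exI[of _ "\<lambda>n. src (f n)"]) fastforce
  then show False using wf_measure[of m] unfolding wf_iff_no_infinite_down_chain by blast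
qed

definition label_ind ::
    "('s, 'l) tr set \<Rightarrow> (('s, 'l) tr \<Rightarrow> 'm) \<Rightarrow> ('m \<Rightarrow> 'm \<Rightarrow> bool) \<Rightarrow> ('s, 'l) tr \<Rightarrow> ('s, 'l) tr \<Rightarrow> bool"
  where "label_ind T label I t u \<longleftrightarrow> t \<in> T \<and> u \<in> T \<and> connected T t u \<and> I (label t) (label u)"

locale label_ltsi =
  fixes T :: "('s, 'l) tr set" and label :: "('s, 'l) tr \<Rightarrow> 'm" and I :: "'m \<Rightarrow> 'm \<Rightarrow> bool"
  assumes inv_closed: "t \<in> T \<Longrightarrow> inv_tr t \<in> T"
    and label_inv_tr: "t \<in> T \<Longrightarrow> label (inv_tr t) = label t"
    and I_sym: "I a b \<Longrightarrow> I b a"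
    and diamond: "t \<in> T \<Longrightarrow> u \<in> T \<Longrightarrow> src t = src u \<Longrightarrow> I (label t) (label u) \<Longrightarrow>
      \<exists>S. Tr (tgt t) (fw u) (lab u) S \<in> T \<and> Tr (tgt u) (fw t) (lab t) S \<in> T"
    and square_label: "square T t u u' t' \<Longrightarrow> I (label t) (label u) \<Longrightarrow> label u' = label u"
    and backward_independent: "t \<in> T \<Longrightarrow> u \<in> T \<Longrightarrow> \<not> fw t \<Longrightarrow> \<not> fw u \<Longrightarrow> src t = src u \<Longrightarrow>
      t \<noteq> u \<Longrightarrow> I (label t) (label u)"
begin

abbreviation ind :: "('s, 'l) tr \<Rightarrow> ('s, 'l) tr \<Rightarrow> bool" where
  "ind \<equiv> label_ind T label I"

lemma sym_step_rel: "sym (step_rel T)"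
proof (rule symI)
  fix P Q assume "(P, Q) \<in> step_rel T"
  then obtain t where "t \<in> T" "src t = P" "tgt t = Q" by (auto simp: step_rel_def)
  then show "(Q, P) \<in> step_rel T" using step_rel_memI[OF inv_closed[OF \<open>t \<in> T\<close>]] by simp
qed

lemma connected_iff:
  assumes "t \<in> T" "u \<in> T"
  shows "connected T t u \<longleftrightarrow> (src t, src u) \<in> (step_rel T)\<^sup>*"
proof -
  have "(src t, tgt t) \<in> (step_rel T)\<^sup>*" "(src u, tgt u) \<in> (step_rel T)\<^sup>*"
    using assms step_rel_memI by blast+
  with sym_rtrancl[OF sym_step_rel] show ?thesis
    unfolding connected_def by (meson rtrancl_trans symD)
qed

lemma SP: "SP T ind"
  unfolding SP_def
proof (intro ballI impI)
  fix t u assume "t \<in> T" "u \<in> T" "src t = src u \<and> ind t u"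
  moreover from this obtain S where "Tr (tgt t) (fw u) (lab u) S \<in> T" "Tr (tgt u) (fw t) (lab t) S \<in> T"
    using diamond by (auto simp: label_ind_def)
  ultimately show "\<exists>u' t'. square T t u u' t'"
    by (intro exI[of _ "Tr (tgt t) (fw u) (lab u) S"] exI[of _ "Tr (tgt u) (fw t) (lab t) S"])
      (simp add: square_def)
qed

lemma BTI: "BTI T ind"
  unfolding BTI_def label_ind_def connected_def
  using backward_independent step_rel_memI by fastforce

lemma PCI: "PCI T ind"
  unfolding PCI_def
proof (intro allI impI)
  fix t u u' t' assume "square T t u u' t' \<and> ind t u"
  then have "t \<in> T" "u' \<in> T" "src u' = tgt t" "label u' = label u" "I (label t) (label u)"
    using square_label by (auto simp: square_def label_ind_def)
  then show "ind u' (inv_tr t)"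
    using inv_closed step_rel_memI[of "inv_tr t"]
    by (auto simp: label_ind_def connected_def label_inv_tr intro: I_sym)
qed

lemma RPI: "RPI T ind"
  unfolding RPI_def
proof (intro ballI impI)
  fix t u assume "t \<in> T" "u \<in> T" "ind t u"
  moreover have "(tgt t, src t) \<in> step_rel T"
    using step_rel_memI[OF inv_closed[OF \<open>t \<in> T\<close>]] by simp
  ultimately show "ind (inv_tr t) u"
    using inv_closed label_inv_tr connected_iff by (auto simp: label_ind_def intro: converse_rtrancl_into_rtrancl)
qed

lemma ev_eq_same_label_connected:
  assumes "(t, t') \<in> ev_eq T ind"
  shows "label t' = label t \<and> (src t, src t') \<in> (step_rel T)\<^sup>*"
proof -
  let ?S = "{(t, t') | t t'. \<exists>u u'. square T t u u' t' \<and> ind t u}"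
  have side: "label t' = label t \<and> (src t, src t') \<in> step_rel T \<and> (src t', src t) \<in> step_rel T"
    if "(t, t') \<in> ?S" for t t'
  proof -
    from that obtain u u' where sq: "square T t u u' t'" and "ind t u" by blast
    then have "label t' = label t"
      using square_label[OF square_sym[OF sq]] I_sym by (simp add: label_ind_def)
    moreover have "(src t, src t') \<in> step_rel T"
      using sq step_rel_memI[of u] by (simp add: square_def)
    ultimately show ?thesis using sym_step_rel by (simp add: symD)
  qed
  from assms have "(t, t') \<in> (?S \<union> ?S\<inverse>)\<^sup>*" by (simp add: ev_eq_def Let_def)
  then show ?thesis
  proof (induction rule: rtrancl_induct)
    case (step y z)
    with side show ?case by (fastforce intro: rtrancl_into_rtrancl)
  qed simp
qed

lemma IRE: "IRE T ind"
  unfolding IRE_def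
proof (intro ballI impI)
  fix t t' u assume "t \<in> T" "t' \<in> T" "u \<in> T" and "(t, t') \<in> ev_eq T ind \<and> ind t' u"
  then show "ind t u"
    using ev_eq_same_label_connected connected_iff by (auto simp: label_ind_def intro: rtrancl_trans)
qed

theorem all_axioms_if_WF: "WF T \<Longrightarrow> all_axioms T ind"
  using SP BTI PCI IRE RPI by (simp add: all_axioms_def)

end

lemma step_rel_image: "step_rel T = (\<lambda>t. (src t, tgt t)) ` T"
  by (auto simp: step_rel_def)

lemma comb_iff: "Tr P d l Q \<in> comb f \<longleftrightarrow> (if d then f P l Q else f Q l P)"
  by (simp add: comb_def)

lemma lts_tgt_reachable: "t \<in> lts f \<Longrightarrow> tgt t \<in> reachable (comb f)"
  unfolding lts_def reachable_def using step_rel_memI by (fastforce intro: rtrancl_into_rtrancl)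

lemma inv_tr_lts: "t \<in> lts f \<Longrightarrow> inv_tr t \<in> lts f"
proof -
  assume "t \<in> lts f"
  moreover have "inv_tr t \<in> comb f" if "t \<in> comb f" using that by (cases t) (simp add: comb_iff)
  ultimately show ?thesis using lts_tgt_reachable by (simp add: lts_def)
qed

lemma lts_map:
  assumes "\<And>P l Q. g P l Q \<longleftrightarrow> (\<exists>\<theta>. f P \<theta> Q \<and> h \<theta> = l)"
  shows "lts g = map_tr id h ` lts f"
proof -
  have comb: "comb g = map_tr id h ` comb f"
  proof (intro set_eqI iffI)
    fix t assume "t \<in> comb g"
    then obtain \<theta> where "Tr (src t) (fw t) \<theta> (tgt t) \<in> comb f" "h \<theta> = lab t"
      using assms by (cases t) (auto simp: comb_iff split: if_splits)
    then show "t \<in> map_tr id h ` comb f" by (force intro: tr.expand)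
  next
    fix t assume "t \<in> map_tr id h ` comb f"
    then obtain \<tau> where "\<tau> \<in> comb f" "t = map_tr id h \<tau>" by blast
    then show "t \<in> comb g" using assms by (cases \<tau>) (auto simp: comb_iff)
  qed
  then have "reachable (comb g) = reachable (comb f)"
    by (simp add: reachable_def step_rel_image image_comp comp_def tr.map_sel)
  then show ?thesis unfolding lts_def comb by (auto simp: tr.map_sel)
qed

section \<open>The LTSIs of CCSKP and CCSK\<close>

lemma TP_iff: "Tr P d \<theta> Q \<in> TP \<longleftrightarrow> stepP P d \<theta> Q \<and> P \<in> reachable (comb fwdP)"
  by (simp add: TP_def lts_def comb_iff stepP_def)

lemma stepP_TP: "\<tau> \<in> TP \<Longrightarrow> stepP (src \<tau>) (fw \<tau>) (lab \<tau>) (tgt \<tau>)"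
  by (cases \<tau>) (simp add: TP_iff)

lemma TP_diamond:
  assumes "\<tau> \<in> TP" "\<upsilon> \<in> TP" "src \<tau> = src \<upsilon>" "lind (lab \<tau>) (lab \<upsilon>)"
  shows "\<exists>S. Tr (tgt \<tau>) (fw \<upsilon>) (lab \<upsilon>) S \<in> TP \<and> Tr (tgt \<upsilon>) (fw \<tau>) (lab \<tau>) S \<in> TP"
  using stepP_diamond[OF stepP_TP[OF assms(1)] _ assms(4)] stepP_TP[OF assms(2)] assms(3)
    lts_tgt_reachable[of _ fwdP] assms(1,2)
  by (fastforce simp: TP_iff TP_def[symmetric])

lemma TP_backward_lind:
  assumes "\<tau> \<in> TP" "\<upsilon> \<in> TP" "\<not> fw \<tau>" "\<not> fw \<upsilon>" "src \<tau> = src \<upsilon>" "\<tau> \<noteq> \<upsilon>"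
  shows "lind (lab \<tau>) (lab \<upsilon>)"
proof (rule backward_stepP_lind)
  show "stepP (src \<tau>) False (lab \<tau>) (tgt \<tau>)" "stepP (src \<tau>) False (lab \<upsilon>) (tgt \<upsilon>)"
    using stepP_TP[OF assms(1)] stepP_TP[OF assms(2)] assms(3-5) by simp_all
  show "(lab \<tau>, tgt \<tau>) \<noteq> (lab \<upsilon>, tgt \<upsilon>)"
    using assms(3-6) tr.expand by auto
qed

lemma TP_determined_by_ends:
  assumes "\<tau> \<in> TP" "\<upsilon> \<in> TP" "src \<upsilon> = src \<tau>" "fw \<upsilon> = fw \<tau>" "tgt \<upsilon> = tgt \<tau>"
  shows "\<upsilon> = \<tau>"
proof -
  have "lab \<upsilon> = lab \<tau>"
    using stepP_label_unique[OF stepP_TP[OF assms(1)]] stepP_TP[OF assms(2)] assms(3-5) by simp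
  then show ?thesis using assms(3-5) by (simp add: tr.expand)
qed

lemma WF_TP: "WF TP"
proof (rule WF_if_backward_decreasing[where m = "card \<circ> keys"])
  fix t assume "t \<in> TP" "\<not> fw t"
  then have "stepP (src t) False (lab t) (tgt t)" using stepP_TP[OF \<open>t \<in> TP\<close>] by simp
  then show "(card \<circ> keys) (tgt t) < (card \<circ> keys) (src t)" by (simp add: backward_stepP_card_keys)
qed

lemma indP_eq: "indP = label_ind TP lab lind"
  by (simp add: fun_eq_iff indP_def label_ind_def)

interpretation P: label_ltsi TP lab lind
proof
  show "inv_tr t \<in> TP" if "t \<in> TP" for t
    using that by (simp add: TP_def inv_tr_lts)
  show "lind b a" if "lind a b" for a b
    using that by (rule lind_sym)
  show "\<exists>S. Tr (tgt t) (fw u) (lab u) S \<in> TP \<and> Tr (tgt u) (fw t) (lab t) S \<in> TP"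
    if "t \<in> TP" "u \<in> TP" "src t = src u" "lind (lab t) (lab u)" for t u
    using that by (rule TP_diamond)
  show "lab u' = lab u" if "square TP t u u' t'" for t u u' t'
    using that by (simp add: square_def)
  show "lind (lab t) (lab u)"
    if "t \<in> TP" "u \<in> TP" "\<not> fw t" "\<not> fw u" "src t = src u" "t \<noteq> u" for t u
    using that by (rule TP_backward_lind)
qed simp

lemma fwdK_imp_fwdP: "fwdK P l Q \<Longrightarrow> \<exists>\<theta>. fwdP P \<theta> Q \<and> erase \<theta> = l"
proof (induction rule: fwdK.induct)
  case (act X a k)
  then show ?case by (intro exI[of _ "PAct a k"]) (simp add: erase_def fwdP.act)
next
  case (pre X b j X' k a)
  then obtain \<theta> where "fwdP X \<theta> X'" "erase \<theta> = (b, j)" by blast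
  with pre show ?case by (intro exI[of _ \<theta>]) (simp add: erase_def fwdP.pre)
next
  case (res X b j X' a)
  then obtain \<theta> where "fwdP X \<theta> X'" "erase \<theta> = (b, j)" by blast
  with res show ?case by (intro exI[of _ \<theta>]) (simp add: erase_def fwdP.res)
next
  case (parL X b j X' Y)
  then obtain \<theta> where "fwdP X \<theta> X'" "erase \<theta> = (b, j)" by blast
  with parL show ?case by (intro exI[of _ "PPar L \<theta>"]) (simp add: erase_def fwdP.parL)
next
  case (parR Y b j Y' X)
  then obtain \<theta> where "fwdP Y \<theta> Y'" "erase \<theta> = (b, j)" by blast
  with parR show ?case by (intro exI[of _ "PPar R \<theta>"]) (simp add: erase_def fwdP.parR)
next
  case (syn X b k X' Y Y')
  then obtain \<theta>1 \<theta>2 where "fwdP X \<theta>1 X'" "erase \<theta>1 = (b, k)" "fwdP Y \<theta>2 Y'" "erase \<theta>2 = (compl b, k)"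
    by blast
  with syn show ?case by (intro exI[of _ "PSyn \<theta>1 \<theta>2"]) (simp add: erase_def fwdP.syn)
next
  case (sumL X l X' Y)
  then obtain \<theta> where "fwdP X \<theta> X'" "erase \<theta> = l" by blast
  with sumL show ?case by (intro exI[of _ "PSum L \<theta>"]) (simp add: erase_def fwdP.sumL)
next
  case (sumR Y l Y' X)
  then obtain \<theta> where "fwdP Y \<theta> Y'" "erase \<theta> = l" by blast
  with sumR show ?case by (intro exI[of _ "PSum R \<theta>"]) (simp add: erase_def fwdP.sumR)
qed

lemma fwdP_imp_fwdK: "fwdP P \<theta> Q \<Longrightarrow> fwdK P (erase \<theta>) Q"
proof (induction rule: fwdP.induct)
  case (syn X \<theta>1 X' Y \<theta>2 Y')
  then show ?case using fwdK.syn[of X "lact \<theta>1" "lkey \<theta>1" X' Y Y'] by (simp add: erase_def)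
qed (auto simp: erase_def intro: fwdK.intros)

lemma fwdK_iff_fwdP: "fwdK P l Q \<longleftrightarrow> (\<exists>\<theta>. fwdP P \<theta> Q \<and> erase \<theta> = l)"
  using fwdK_imp_fwdP fwdP_imp_fwdK by blast

abbreviation erase_tr :: "('s, ('n, 'k) plabel) tr \<Rightarrow> ('s, 'n act \<times> 'k) tr" where
  "erase_tr \<equiv> map_tr id erase"

lemma TK_eq: "TK = erase_tr ` TP"
  unfolding TK_def TP_def by (rule lts_map) (rule fwdK_iff_fwdP)

lemma bij_betw_erase_tr: "bij_betw erase_tr TP TK"
  unfolding bij_betw_def TK_eq
proof (intro conjI inj_onI refl)
  fix \<tau> \<upsilon> assume "\<tau> \<in> TP" "\<upsilon> \<in> TP" and eq: "erase_tr \<tau> = erase_tr \<upsilon>"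
  have "src \<tau> = src \<upsilon>" "fw \<tau> = fw \<upsilon>" "tgt \<tau> = tgt \<upsilon>"
    using arg_cong[OF eq, of src] arg_cong[OF eq, of fw] arg_cong[OF eq, of tgt] by (simp_all add: tr.map_sel)
  then show "\<tau> = \<upsilon>" by (rule TP_determined_by_ends[OF \<open>\<upsilon> \<in> TP\<close> \<open>\<tau> \<in> TP\<close>])
qed

definition proof_tr :: "(('n, 'k) proc, 'n act \<times> 'k) tr \<Rightarrow> (('n, 'k) proc, ('n, 'k) plabel) tr" where
  "proof_tr = the_inv_into TP erase_tr"

lemma proof_tr_TP: "t \<in> TK \<Longrightarrow> proof_tr t \<in> TP"
  unfolding proof_tr_def using bij_betw_apply[OF bij_betw_the_inv_into[OF bij_betw_erase_tr]] .

lemma erase_proof_tr: "t \<in> TK \<Longrightarrow> erase_tr (proof_tr t) = t"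
  unfolding proof_tr_def by (rule f_the_inv_into_f_bij_betw[OF bij_betw_erase_tr])

lemma proof_tr_erase: "\<tau> \<in> TP \<Longrightarrow> proof_tr (erase_tr \<tau>) = \<tau>"
  unfolding proof_tr_def by (rule the_inv_into_f_f[OF bij_betw_imp_inj_on[OF bij_betw_erase_tr]])

lemma proof_tr_sel:
  assumes "t \<in> TK"
  shows "src (proof_tr t) = src t" "fw (proof_tr t) = fw t" "tgt (proof_tr t) = tgt t"
    "erase (lab (proof_tr t)) = lab t"
  using arg_cong[OF erase_proof_tr[OF assms], of src] arg_cong[OF erase_proof_tr[OF assms], of fw]
    arg_cong[OF erase_proof_tr[OF assms], of tgt] arg_cong[OF erase_proof_tr[OF assms], of lab]
  by (simp_all add: tr.map_sel)

lemma stepP_proof_tr: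
  assumes "t \<in> TK"
  shows "stepP (src t) (fw t) (lab (proof_tr t)) (tgt t)"
  using stepP_TP[OF proof_tr_TP[OF assms]] assms by (simp add: proof_tr_sel)

lemma proof_tr_eq: "t \<in> TK \<Longrightarrow> proof_tr t = Tr (src t) (fw t) (lab (proof_tr t)) (tgt t)"
  by (rule tr.expand) (simp add: proof_tr_sel)

lemma proof_label_unique:
  assumes "t \<in> TK" "Tr (src t) (fw t) \<theta> (tgt t) \<in> TP" "erase \<theta> = lab t"
  shows "\<theta> = lab (proof_tr t)"
proof -
  have "erase_tr (Tr (src t) (fw t) \<theta> (tgt t)) = t" using assms(3) by (simp add: tr.expand)
  then show ?thesis using proof_tr_erase[OF assms(2)] by force
qed

lemma indK_eq: "indK = label_ind TK (lab \<circ> proof_tr) lind"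
proof (intro ext iffI)
  fix t u assume "indK t u"
  then show "label_ind TK (lab \<circ> proof_tr) lind t u"
    unfolding indK_def label_ind_def using proof_label_unique by (metis comp_apply)
next
  fix t u assume "label_ind TK (lab \<circ> proof_tr) lind t u"
  then show "indK t u"
    unfolding indK_def label_ind_def using proof_tr_eq proof_tr_TP proof_tr_sel(4) by (metis comp_apply)
qed

lemma erase_tr_inv_tr: "erase_tr (inv_tr \<tau>) = inv_tr (erase_tr \<tau>)"
  by (cases \<tau>) simp

lemma proof_tr_inv_tr: "t \<in> TK \<Longrightarrow> proof_tr (inv_tr t) = inv_tr (proof_tr t)"
  using proof_tr_erase[OF P.inv_closed[OF proof_tr_TP]] erase_tr_inv_tr erase_proof_tr by metis

lemma lkey_eq_snd_erase: "lkey \<theta> = snd (erase \<theta>)"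
  by (simp add: erase_def)

lemma TK_square_label:
  assumes "square TK t u u' t'" "lind (lab (proof_tr t)) (lab (proof_tr u))"
  shows "lab (proof_tr u') = lab (proof_tr u)"
proof -
  have in_TK: "t \<in> TK" "u \<in> TK" "u' \<in> TK" "t' \<in> TK" using assms(1) by (simp_all add: square_def)
  have sides: "src u = src t" "src u' = tgt t" "src t' = tgt u" "tgt t' = tgt u'" "fw u' = fw u" "fw t' = fw t"
    "lab u' = lab u" "lab t' = lab t"
    using assms(1) by (simp_all add: square_def)
  then have "stepP (src t) (fw u) (lab (proof_tr u)) (tgt u)"
    "stepP (tgt t) (fw u) (lab (proof_tr u')) (tgt u')" "stepP (tgt u) (fw t) (lab (proof_tr t')) (tgt u')"
    using stepP_proof_tr[OF in_TK(2)] stepP_proof_tr[OF in_TK(3)] stepP_proof_tr[OF in_TK(4)] by simp_all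
  moreover have "lkey (lab (proof_tr u')) = lkey (lab (proof_tr u))" "lkey (lab (proof_tr t')) = lkey (lab (proof_tr t))"
    using sides in_TK by (simp_all add: lkey_eq_snd_erase proof_tr_sel)
  ultimately show ?thesis
    using stepP_square_label_determined[OF stepP_proof_tr[OF in_TK(1)] _ assms(2)] by blast
qed

lemma TK_diamond:
  assumes "t \<in> TK" "u \<in> TK" "src t = src u" "lind (lab (proof_tr t)) (lab (proof_tr u))"
  shows "\<exists>S. Tr (tgt t) (fw u) (lab u) S \<in> TK \<and> Tr (tgt u) (fw t) (lab t) S \<in> TK"
proof -
  have "src (proof_tr t) = src (proof_tr u)" using assms(1-3) by (simp add: proof_tr_sel)
  with TP_diamond[OF proof_tr_TP[OF assms(1)] proof_tr_TP[OF assms(2)]] assms(4)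
  obtain S where "Tr (tgt t) (fw u) (lab (proof_tr u)) S \<in> TP" "Tr (tgt u) (fw t) (lab (proof_tr t)) S \<in> TP"
    using assms(1,2) by (auto simp: proof_tr_sel)
  then have "erase_tr (Tr (tgt t) (fw u) (lab (proof_tr u)) S) \<in> TK"
    "erase_tr (Tr (tgt u) (fw t) (lab (proof_tr t)) S) \<in> TK"
    unfolding TK_eq by blast+
  then show ?thesis using assms(1,2) by (auto simp: proof_tr_sel)
qed

interpretation K: label_ltsi TK "lab \<circ> proof_tr" lind
proof
  show "inv_tr t \<in> TK" if "t \<in> TK" for t
    using that by (simp add: TK_def inv_tr_lts)
  show "(lab \<circ> proof_tr) (inv_tr t) = (lab \<circ> proof_tr) t" if "t \<in> TK" for t
    using that by (simp add: proof_tr_inv_tr)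
  show "lind b a" if "lind a b" for a b
    using that by (rule lind_sym)
  show "\<exists>S. Tr (tgt t) (fw u) (lab u) S \<in> TK \<and> Tr (tgt u) (fw t) (lab t) S \<in> TK"
    if "t \<in> TK" "u \<in> TK" "src t = src u" "lind ((lab \<circ> proof_tr) t) ((lab \<circ> proof_tr) u)" for t u
    using that by (simp add: TK_diamond)
  show "(lab \<circ> proof_tr) u' = (lab \<circ> proof_tr) u"
    if "square TK t u u' t'" "lind ((lab \<circ> proof_tr) t) ((lab \<circ> proof_tr) u)" for t u u' t'
    using that by (simp add: TK_square_label)
  show "lind ((lab \<circ> proof_tr) t) ((lab \<circ> proof_tr) u)"
    if "t \<in> TK" "u \<in> TK" "\<not> fw t" "\<not> fw u" "src t = src u" "t \<noteq> u" for t u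
  proof -
    have "proof_tr t \<noteq> proof_tr u" using that(1,2,6) erase_proof_tr by metis
    then show ?thesis
      using TP_backward_lind[OF proof_tr_TP[OF that(1)] proof_tr_TP[OF that(2)]] that by (simp add: proof_tr_sel)
  qed
qed

lemma WF_TK: "WF TK"
proof (rule WF_if_backward_decreasing[where m = "card \<circ> keys"])
  fix t assume "t \<in> TK" "\<not> fw t"
  then have "stepP (src t) False (lab (proof_tr t)) (tgt t)" using stepP_proof_tr[OF \<open>t \<in> TK\<close>] by simp
  then show "(card \<circ> keys) (tgt t) < (card \<circ> keys) (src t)" by (simp add: backward_stepP_card_keys)
qed

theorem theorem6p1:
  shows "all_axioms (TP :: (('n, 'k) proc, ('n, 'k) plabel) tr set) indP
       \<and> all_axioms (TK :: (('n, 'k) proc, 'n act \<times> 'k) tr set) indK"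
  using P.all_axioms_if_WF[OF WF_TP] K.all_axioms_if_WF[OF WF_TK] by (simp add: indP_eq indK_eq)

end
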